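(* Let $\Delta$ be a simplicial polytopal fan in $\mathbb{R}^d$ with ray generators $\mathbf{v}_1,\ldots,\mathbf{v}_n$ and let $m\ge1$. Let $\Delta^m$ be the polyhedral fan in $\mathbb{R}^{m\times d}$ whose cells are the products $\sigma_1\times\cdots\times\sigma_m$ with $\sigma_j\in\Delta$ (the $j$-th factor constraining the $j$-th row). Let $\Upsilon$ be the collection of all closed cones $\overline{U_G}$, $G\in\mathcal{G}$, such that $G$ has no matching of size $n$. Then $\Upsilon$ is a polyhedral subcomplex of $\Delta^m$.
   Context: A fan is simplicial if every cone is generated by linearly independent vectors; polytopal if it is the normal fan of a polytope. For $\mathbf{u}\in\mathbb{R}^d$, with $\sigma$ the cone of $\Delta$ containing $\mathbf{u}$ in its relative interior and $\mathbf{u}=\sum_{k\in I_\sigma}\lambda_k\mathbf{v}_k$ over the generators of $\sigma$, set $[\mathbf{u}]_i=\lambda_i$ for $i\in I_\sigma$ and $0$ otherwise. For $U\in\mathbb{R}^{m\times d}$ with rows $\mathbf{u}^{(1)},\ldots,\mathbf{u}^{(m)}$, $G_U$ is the bipartite graph on $[n]\sqcup[m]$ with $i\in[n]$ adjacent to $j\in[m]$ iff $[\mathbf{u}^{(j)}]_i>0$. $\mathcal{G}$ is the set of graphs of the form $G_U$, and for $G\in\mathcal{G}$, $U_G=\{U\in\mathbb{R}^{m\times d}\colon G_U=G\}$; one has $U_{G_U}=\operatorname{relint}\sigma(\mathbf{u}^{(1)})\times\cdots\times\operatorname{relint}\sigma(\mathbf{u}^{(m)})$, where $\sigma(\mathbf{u})$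 is the cone of $\Delta$ containing $\mathbf{u}$ in its relative interior, and the closures $\overline{U_G}$ are exactly the cells of $\Delta^m$. *)

theory Defs
  imports "HOL-Analysis.Analysis"
begin

definition normal_cone :: "('a::euclidean_space) set \<Rightarrow> 'a set \<Rightarrow> 'a set" where
  "normal_cone P F = {c. \<forall>x\<in>F. \<forall>y\<in>P. c \<bullet> y \<le> c \<bullet> x}"

definition normal_fan :: "('a::euclidean_space) set \<Rightarrow> 'a set set" where
  "normal_fan P = {normal_cone P F | F. F face_of P \<and> F \<noteq> {}}"

definition polytopal_fan :: "('a::euclidean_space) set set \<Rightarrow> bool" where
  "polytopal_fan \<Delta> \<longleftrightarrow> (\<exists>P. polytope P \<and> \<Delta> = normal_fan P)"

definition simplicial_fan :: "('a::euclidean_space) set set \<Rightarrow> bool" where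
  "simplicial_fan \<Delta> \<longleftrightarrow> (\<forall>\<sigma>\<in>\<Delta>. \<exists>S. independent S \<and> \<sigma> = convex_cone hull S)"

definition ray_generators :: "('a::euclidean_space) set set \<Rightarrow> ('n \<Rightarrow> 'a) \<Rightarrow> bool" where
  "ray_generators \<Delta> v \<longleftrightarrow>
     (\<forall>i. v i \<noteq> 0) \<and> inj (\<lambda>i. convex_cone hull {v i}) \<and>
     {\<sigma>\<in>\<Delta>. aff_dim \<sigma> = 1} = range (\<lambda>i. convex_cone hull {v i})"

definition cone_of :: "('a::euclidean_space) set set \<Rightarrow> 'a \<Rightarrow> 'a set" where
  "cone_of \<Delta> u = (THE \<sigma>. \<sigma> \<in> \<Delta> \<and> u \<in> rel_interior \<sigma>)"

definition gen_idx :: "('n \<Rightarrow> 'a::euclidean_space) \<Rightarrow> 'a set \<Rightarrow> 'n set" where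
  "gen_idx v \<sigma> = {k. v k \<in> \<sigma>}"

definition coord :: "('a::euclidean_space) set set \<Rightarrow> ('n::finite \<Rightarrow> 'a) \<Rightarrow> 'a \<Rightarrow> 'n \<Rightarrow> real" where
  "coord \<Delta> v u i =
     (THE c. (\<forall>k. k \<notin> gen_idx v (cone_of \<Delta> u) \<longrightarrow> c k = 0) \<and>
             u = (\<Sum>k\<in>gen_idx v (cone_of \<Delta> u). c k *\<^sub>R v k)) i"

(* G_U as its edge set: (i,j) with i \<in> [n], j \<in> [m] *)
definition graph_of :: "('a::euclidean_space) set set \<Rightarrow> ('n::finite \<Rightarrow> 'a) \<Rightarrow> 'a ^ 'm \<Rightarrow> ('n \<times> 'm) set" where
  "graph_of \<Delta> v U = {(i, j). coord \<Delta> v (U $ j) i > 0}"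

definition graphs :: "('a::euclidean_space) set set \<Rightarrow> ('n::finite \<Rightarrow> 'a) \<Rightarrow> ('n \<times> 'm::finite) set set" where
  "graphs \<Delta> v = range (graph_of \<Delta> v)"

definition U_of :: "('a::euclidean_space) set set \<Rightarrow> ('n::finite \<Rightarrow> 'a) \<Rightarrow> ('n \<times> 'm::finite) set \<Rightarrow> ('a ^ 'm) set" where
  "U_of \<Delta> v G = {U. graph_of \<Delta> v U = G}"

definition is_matching :: "('n \<times> 'm) set \<Rightarrow> ('n \<times> 'm) set \<Rightarrow> bool" where
  "is_matching E M \<longleftrightarrow> M \<subseteq> E \<and>
     (\<forall>e\<in>M. \<forall>e'\<in>M. e \<noteq> e' \<longrightarrow> fst e \<noteq> fst e' \<and> snd e \<noteq> snd e')"

definition has_matching_of_size :: "('n \<times> 'm) set \<Rightarrow> nat \<Rightarrow> bool" where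
  "has_matching_of_size E k \<longleftrightarrow> (\<exists>M. is_matching E M \<and> finite M \<and> card M = k)"

definition product_fan :: "('a::euclidean_space) set set \<Rightarrow> ('a ^ 'm::finite) set set" where
  "product_fan \<Delta> = {{U. \<forall>j. U $ j \<in> \<sigma> j} | \<sigma>. \<forall>j. \<sigma> j \<in> \<Delta>}"

definition subcomplex :: "('a::euclidean_space) set set \<Rightarrow> 'a set set \<Rightarrow> bool" where
  "subcomplex \<Upsilon> F \<longleftrightarrow> \<Upsilon> \<subseteq> F \<and>
     (\<forall>C\<in>\<Upsilon>. \<forall>D. D face_of C \<and> D \<noteq> {} \<longrightarrow> D \<in> \<Upsilon>)"

end

(* Write Delta as the normal fan of a polytope P. The cone of Delta containing u in its
   relative interior is the normal cone of the face of P on which u is maximised; in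
   particular every nonempty face of a cell is again a cell. Simpliciality makes each cell
   the cone over the ray generators v_i it contains, and these are linearly independent, so
   [u]_i > 0 exactly when v_i lies in sigma(u). Hence G_U only records which generators lie
   in the row cells sigma(u^(j)), and the closure of U_(G_U) is the product cell
   sigma(u^(1)) x ... x sigma(u^(m)). A nonempty face of a product of convex sets is the
   product of faces tau_j of the factors; the tau_j are cells of Delta contained in the
   sigma(u^(j)), so the face is the closure of U_G' for a subgraph G' of G_U, and a
   subgraph of a graph without a matching of size n has no such matching either. *)

theory Submission
  imports Defs
begin

section \<open>Normal cones of a polytope\<close>

definition maximizers :: "'a::euclidean_space set \<Rightarrow> 'a \<Rightarrow> 'a set" where
  "maximizers P c = {x\<in>P. \<forall>y\<in>P. c \<bullet> y \<le> c \<bullet> x}"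

lemma maximizers_subset: "maximizers P c \<subseteq> P"
  by (auto simp: maximizers_def)

lemma normal_cone_iff_subset_maximizers:
  "F \<subseteq> P \<Longrightarrow> c \<in> normal_cone P F \<longleftrightarrow> F \<subseteq> maximizers P c"
  by (auto simp: normal_cone_def maximizers_def)

lemma in_normal_cone_maximizers: "c \<in> normal_cone P (maximizers P c)"
  by (auto simp: normal_cone_def maximizers_def)

lemma normal_cone_antimono: "F \<subseteq> G \<Longrightarrow> normal_cone P G \<subseteq> normal_cone P F"
  by (auto simp: normal_cone_def)

lemma convex_cone_normal_cone: "convex_cone (normal_cone P F)"
  unfolding convex_cone_iff normal_cone_def by (auto simp: inner_add_left intro: add_mono mult_left_mono)

lemma convex_normal_cone: "convex (normal_cone P F)"
  using convex_cone_normal_cone unfolding convex_cone_def by blast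

lemma closed_normal_cone: "closed (normal_cone P F)"
proof -
  have "normal_cone P F = (\<Inter>x\<in>F. \<Inter>y\<in>P. {c. c \<bullet> y \<le> c \<bullet> x})"
    by (auto simp: normal_cone_def)
  then show ?thesis by (simp add: closed_INT closed_Collect_le continuous_on_inner continuous_on_id)
qed

lemma maximizers_nonempty: "compact P \<Longrightarrow> P \<noteq> {} \<Longrightarrow> maximizers P c \<noteq> {}"
  using continuous_attains_sup[of P "\<lambda>x. c \<bullet> x"] by (auto simp: maximizers_def continuous_on_inner)

lemma maximizers_face_of:
  assumes "convex P"
  shows "maximizers P c face_of P"
proof (cases "maximizers P c = {}")
  case False
  then obtain x where x: "x \<in> maximizers P c" by blast
  then have "maximizers P c = P \<inter> {y. c \<bullet> y = c \<bullet> x}"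
    by (auto simp: maximizers_def intro: order.antisym)
  moreover have "\<And>y. y \<in> P \<Longrightarrow> c \<bullet> y \<le> c \<bullet> x" using x by (auto simp: maximizers_def)
  ultimately show ?thesis using face_of_Int_supporting_hyperplane_le[OF assms] by simp
qed simp

lemma normal_cone_eq_rel_interior_point:
  assumes P: "convex P" and G: "G face_of P" and g: "g \<in> rel_interior G"
  shows "normal_cone P G = normal_cone P {g}"
proof
  have gG: "g \<in> G" using g rel_interior_subset by blast
  then show "normal_cone P G \<subseteq> normal_cone P {g}" by (simp add: normal_cone_antimono)
  have GP: "G \<subseteq> P" using G face_of_imp_subset by blast
  show "normal_cone P {g} \<subseteq> normal_cone P G"
  proof
    fix x assume "x \<in> normal_cone P {g}"
    then have "g \<in> maximizers P x" using gG GP by (auto simp: normal_cone_def maximizers_def)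
    then have "G \<subseteq> maximizers P x"
      using subset_of_face_of[OF maximizers_face_of[OF P] GP] g by blast
    then show "x \<in> normal_cone P G" using GP normal_cone_iff_subset_maximizers by blast
  qed
qed

lemma normal_cone_face_of_normal_cone:
  assumes P: "compact P" "convex P" and F: "F face_of P" "F \<noteq> {}"
    and G: "G face_of P" "F \<subseteq> G"
  shows "normal_cone P G face_of normal_cone P F"
proof -
  obtain f where f: "f \<in> F" using F by blast
  have "convex G" "G \<noteq> {}" using G F face_of_imp_convex by blast+
  then obtain g where g: "g \<in> rel_interior G" using rel_interior_eq_empty by blast
  have gG: "g \<in> G" and gP: "g \<in> P" using g rel_interior_subset G face_of_imp_subset by blast+
  have fP: "f \<in> P" using f F face_of_imp_subset by blast
  have gf: "x \<bullet> g \<le> x \<bullet> f" if "x \<in> normal_cone P F" for x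
    using that f gP by (auto simp: normal_cone_def)
  have inner_diff: "(g - f) \<bullet> x = x \<bullet> g - x \<bullet> f" for x
    by (simp add: inner_diff_left inner_diff_right inner_commute[of _ x])
  have "normal_cone P G = normal_cone P F \<inter> {x. (g - f) \<bullet> x = 0}"
  proof
    show "normal_cone P G \<subseteq> normal_cone P F \<inter> {x. (g - f) \<bullet> x = 0}"
    proof
      fix x assume x: "x \<in> normal_cone P G"
      then have "x \<in> normal_cone P F" using normal_cone_antimono[OF G(2)] by blast
      moreover have "x \<bullet> f \<le> x \<bullet> g"
        using x gG fP unfolding normal_cone_def by blast
      ultimately show "x \<in> normal_cone P F \<inter> {x. (g - f) \<bullet> x = 0}"
        using gf inner_diff by fastforce
    qed
    show "normal_cone P F \<inter> {x. (g - f) \<bullet> x = 0} \<subseteq> normal_cone P G"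
      unfolding normal_cone_eq_rel_interior_point[OF P(2) G(1) g]
      using f inner_diff by (fastforce simp: normal_cone_def)
  qed
  moreover have "(g - f) \<bullet> x \<le> 0" if "x \<in> normal_cone P F" for x
    using gf[OF that] inner_diff by simp
  ultimately show ?thesis by (simp add: face_of_Int_supporting_hyperplane_le convex_normal_cone)
qed

lemma eventually_nhds_inner_less_finite:
  fixes c q :: "'a::real_inner"
  assumes "finite V" "\<And>p. p \<in> V \<Longrightarrow> c \<bullet> p < c \<bullet> q"
  shows "\<forall>\<^sub>F x in nhds c. \<forall>p\<in>V. x \<bullet> p < x \<bullet> q"
proof (rule eventually_ball_finite[OF assms(1)], intro ballI)
  fix p assume "p \<in> V"
  have "open {x. x \<bullet> p < x \<bullet> q}" by (intro open_Collect_less continuous_intros)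
  from eventually_nhds_in_open[OF this] show "\<forall>\<^sub>F x in nhds c. x \<bullet> p < x \<bullet> q"
    using assms(2)[OF \<open>p \<in> V\<close>] by simp
qed

lemma rel_interior_normal_cone_maximizers:
  assumes P: "polytope P" "P \<noteq> {}"
  shows "c \<in> rel_interior (normal_cone P (maximizers P c))"
proof -
  obtain V where V: "finite V" "P = convex hull V" using P(1) unfolding polytope_def by blast
  define A where "A = maximizers P c"
  obtain f where f: "f \<in> A"
    using maximizers_nonempty[OF polytope_imp_compact[OF P(1)] P(2)] A_def by blast
  define L where "L = {x. \<forall>a\<in>A. x \<bullet> a = x \<bullet> f}"
  have "affine L" unfolding L_def affine_def by (simp add: inner_add_left)
  moreover have "normal_cone P A \<subseteq> L"
    using f maximizers_subset[of P c] unfolding A_def L_def normal_cone_def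
    by (blast intro: order.antisym)
  ultimately have hull_L: "affine hull (normal_cone P A) \<subseteq> L" by (simp add: hull_minimal)
  \<comment> \<open>Inside \<open>L\<close> only the vertices outside \<open>A\<close> can violate the normal-cone
    inequalities, and \<open>c\<close> satisfies those strictly.\<close>
  have "c \<bullet> p < c \<bullet> f" if p: "p \<in> V - A" for p
  proof -
    have "p \<in> P" using p hull_subset[of V convex] V(2) by blast
    with p obtain y where "y \<in> P" "c \<bullet> p < c \<bullet> y" unfolding A_def maximizers_def by (auto simp: not_le)
    moreover have "c \<bullet> y \<le> c \<bullet> f" using \<open>y \<in> P\<close> f unfolding A_def maximizers_def by blast
    ultimately show ?thesis by linarith
  qed
  then have "\<forall>\<^sub>F x in nhds c. \<forall>p\<in>V - A. x \<bullet> p < x \<bullet> f"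
    using V(1) by (intro eventually_nhds_inner_less_finite) auto
  then obtain e where e: "e > 0" "\<And>x. dist x c < e \<Longrightarrow> \<forall>p\<in>V - A. x \<bullet> p < x \<bullet> f"
    unfolding eventually_nhds_metric by blast
  have "x \<in> normal_cone P A" if x: "x \<in> ball c e" "x \<in> L" for x
  proof -
    have "\<forall>p\<in>V - A. x \<bullet> p < x \<bullet> f" using x(1) e(2) by (simp add: dist_commute)
    moreover have "\<forall>p\<in>A. x \<bullet> p = x \<bullet> f" using x(2) unfolding L_def by blast
    ultimately have "V \<subseteq> {y. x \<bullet> y \<le> x \<bullet> f}" by (auto intro: less_imp_le)
    then have "P \<subseteq> {y. x \<bullet> y \<le> x \<bullet> f}"
      unfolding V(2) by (simp add: hull_minimal convex_halfspace_le)
    then show ?thesis using x(2) unfolding L_def normal_cone_def by auto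
  qed
  then have "ball c e \<inter> affine hull (normal_cone P A) \<subseteq> normal_cone P A" using hull_L by blast
  then show ?thesis
    unfolding A_def mem_rel_interior_ball using e(1) in_normal_cone_maximizers by blast
qed

section \<open>The normal fan\<close>

lemma normal_cone_maximizers_in_normal_fan:
  "polytope P \<Longrightarrow> P \<noteq> {} \<Longrightarrow> normal_cone P (maximizers P c) \<in> normal_fan P"
  unfolding normal_fan_def
  using maximizers_face_of[OF polytope_imp_convex] maximizers_nonempty[OF polytope_imp_compact]
  by blast

lemma normal_fanE:
  assumes "\<sigma> \<in> normal_fan P"
  obtains F where "F face_of P" "F \<noteq> {}" "\<sigma> = normal_cone P F"
  using assms by (auto simp: normal_fan_def)

lemma normal_fan_nonempty_polytope: "\<sigma> \<in> normal_fan P \<Longrightarrow> P \<noteq> {}"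
  by (metis normal_fanE face_of_empty)

lemma convex_cone_normal_fan: "\<sigma> \<in> normal_fan P \<Longrightarrow> convex_cone \<sigma>"
  by (metis normal_fanE convex_cone_normal_cone)

lemma convex_normal_fan: "\<sigma> \<in> normal_fan P \<Longrightarrow> convex \<sigma>"
  by (metis normal_fanE convex_normal_cone)

lemma closed_normal_fan: "\<sigma> \<in> normal_fan P \<Longrightarrow> closed \<sigma>"
  by (metis normal_fanE closed_normal_cone)

lemma normal_fan_cell_nonempty: "\<sigma> \<in> normal_fan P \<Longrightarrow> \<sigma> \<noteq> {}"
  by (metis normal_fanE convex_cone_normal_cone convex_cone_def)

lemma normal_cone_maximizers_face_of_normal_fan:
  assumes P: "polytope P" and \<sigma>: "\<sigma> \<in> normal_fan P" and c: "c \<in> \<sigma>"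
  shows "normal_cone P (maximizers P c) face_of \<sigma>"
proof -
  obtain F where F: "F face_of P" "F \<noteq> {}" "\<sigma> = normal_cone P F" using \<sigma> by (rule normal_fanE)
  then have "F \<subseteq> maximizers P c" using c normal_cone_iff_subset_maximizers face_of_imp_subset by blast
  then show ?thesis
    unfolding F(3) using P F(1,2)
    by (intro normal_cone_face_of_normal_cone polytope_imp_compact polytope_imp_convex
        maximizers_face_of)
qed

lemma normal_fan_eq_normal_cone_maximizers:
  assumes P: "polytope P" and \<sigma>: "\<sigma> \<in> normal_fan P" and c: "c \<in> rel_interior \<sigma>"
  shows "\<sigma> = normal_cone P (maximizers P c)"
proof -
  have face: "normal_cone P (maximizers P c) face_of \<sigma>"
    using normal_cone_maximizers_face_of_normal_fan[OF P \<sigma>] c rel_interior_subset by blast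
  have "\<sigma> \<subseteq> normal_cone P (maximizers P c)"
    by (rule subset_of_face_of[OF face subset_refl]) (use c in_normal_cone_maximizers in blast)
  then show ?thesis using face face_of_imp_subset by blast
qed

lemma cone_of_normal_fan:
  assumes "polytope P" "P \<noteq> {}"
  shows "cone_of (normal_fan P) u = normal_cone P (maximizers P u)"
  unfolding cone_of_def
proof (rule the_equality)
  show "normal_cone P (maximizers P u) \<in> normal_fan P \<and> u \<in> rel_interior (normal_cone P (maximizers P u))"
    using assms normal_cone_maximizers_in_normal_fan rel_interior_normal_cone_maximizers by blast
next
  fix \<sigma> assume "\<sigma> \<in> normal_fan P \<and> u \<in> rel_interior \<sigma>"
  then show "\<sigma> = normal_cone P (maximizers P u)"
    using normal_fan_eq_normal_cone_maximizers[OF assms(1)] by blast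
qed

lemma face_of_normal_fan_in_normal_fan:
  assumes P: "polytope P" and \<sigma>: "\<sigma> \<in> normal_fan P" and K: "K face_of \<sigma>" "K \<noteq> {}"
  shows "K \<in> normal_fan P"
proof -
  obtain c where c: "c \<in> rel_interior K"
    using K face_of_imp_convex rel_interior_eq_empty by blast
  then have "c \<in> \<sigma>" using K face_of_imp_subset rel_interior_subset by blast
  then have "normal_cone P (maximizers P c) face_of \<sigma>"
    by (rule normal_cone_maximizers_face_of_normal_fan[OF P \<sigma>])
  moreover have "c \<in> rel_interior (normal_cone P (maximizers P c))"
    using rel_interior_normal_cone_maximizers[OF P normal_fan_nonempty_polytope[OF \<sigma>]] .
  ultimately have "K = normal_cone P (maximizers P c)"
    using face_of_eq[OF K(1)] c by blast
  then show ?thesis using normal_cone_maximizers_in_normal_fan[OF P normal_fan_nonempty_polytope[OF \<sigma>]] by simp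
qed

lemma normal_fan_subset_imp_face_of:
  assumes P: "polytope P" and \<tau>: "\<tau> \<in> normal_fan P" and \<sigma>: "\<sigma> \<in> normal_fan P" and "\<tau> \<subseteq> \<sigma>"
  shows "\<tau> face_of \<sigma>"
proof -
  obtain c where c: "c \<in> rel_interior \<tau>"
    using convex_normal_fan[OF \<tau>] normal_fan_cell_nonempty[OF \<tau>] rel_interior_eq_empty by blast
  then have "c \<in> \<sigma>" using \<open>\<tau> \<subseteq> \<sigma>\<close> rel_interior_subset by blast
  then show ?thesis
    using normal_cone_maximizers_face_of_normal_fan[OF P \<sigma>]
      normal_fan_eq_normal_cone_maximizers[OF P \<tau> c] by simp
qed

section \<open>Simplicial cones\<close>

lemma convex_cone_sum:
  assumes "convex_cone S" "\<And>k. k \<in> I \<Longrightarrow> f k \<in> S"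
  shows "sum f I \<in> S"
  using assms(2)
  by (induction I rule: infinite_finite_induct)
    (auto simp: convex_cone_add[OF assms(1)] convex_cone_contains_0[OF assms(1)])

lemma convex_cone_hull_image_finite:
  fixes v :: "'i \<Rightarrow> 'a::real_vector"
  assumes "finite I"
  shows "convex_cone hull (v ` I) = {\<Sum>k\<in>I. a k *\<^sub>R v k | a. \<forall>k\<in>I. 0 \<le> a k}"
    (is "_ = ?C")
proof
  show "convex_cone hull (v ` I) \<subseteq> ?C"
  proof (rule hull_minimal)
    show "v ` I \<subseteq> ?C"
    proof
      fix x assume "x \<in> v ` I"
      then obtain k where k: "k \<in> I" "x = v k" by blast
      have "(\<Sum>j\<in>I. (if j = k then 1 else 0) *\<^sub>R v j) = v k"
        using assms k(1) by (simp add: if_distrib[of "\<lambda>c. c *\<^sub>R _"] cong: if_cong)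
      then show "x \<in> ?C" using k(2) by (intro CollectI exI[of _ "\<lambda>j. if j = k then 1 else 0"]) auto
    qed
    have add: "(\<Sum>k\<in>I. a k *\<^sub>R v k) + (\<Sum>k\<in>I. b k *\<^sub>R v k) = (\<Sum>k\<in>I. (a k + b k) *\<^sub>R v k)"
      and mul: "c *\<^sub>R (\<Sum>k\<in>I. a k *\<^sub>R v k) = (\<Sum>k\<in>I. (c * a k) *\<^sub>R v k)" for a b c
      by (simp_all add: sum.distrib scaleR_add_left scaleR_sum_right)
    show "convex_cone ?C"
      unfolding convex_cone_iff
    proof (intro conjI ballI allI impI)
      show "0 \<in> ?C" by (intro CollectI exI[of _ "\<lambda>_. 0"]) simp
    next
      fix x y assume "x \<in> ?C" "y \<in> ?C"
      then obtain a b where "\<forall>k\<in>I. 0 \<le> a k" "x = (\<Sum>k\<in>I. a k *\<^sub>R v k)"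
        "\<forall>k\<in>I. 0 \<le> b k" "y = (\<Sum>k\<in>I. b k *\<^sub>R v k)" by blast
      then show "x + y \<in> ?C" by (intro CollectI exI[of _ "\<lambda>k. a k + b k"]) (simp add: add)
    next
      fix x and c :: real assume "x \<in> ?C" "0 \<le> c"
      then obtain a where "\<forall>k\<in>I. 0 \<le> a k" "x = (\<Sum>k\<in>I. a k *\<^sub>R v k)" by blast
      then show "c *\<^sub>R x \<in> ?C" using \<open>0 \<le> c\<close>
        by (intro CollectI exI[of _ "\<lambda>k. c * a k"]) (simp add: mul)
    qed
  qed
  show "?C \<subseteq> convex_cone hull (v ` I)"
  proof
    fix x assume "x \<in> ?C"
    then obtain a where "\<forall>k\<in>I. 0 \<le> a k" "x = (\<Sum>k\<in>I. a k *\<^sub>R v k)" by blast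
    then show "x \<in> convex_cone hull (v ` I)"
      by (simp add: convex_cone_sum convex_cone_convex_cone_hull convex_cone_hull_mul hull_inc)
  qed
qed

lemma independent_image_coeffs_eq:
  fixes v :: "'i \<Rightarrow> 'a::euclidean_space"
  assumes ind: "independent (v ` I)" and inj: "inj_on v I"
    and eq: "(\<Sum>k\<in>I. a k *\<^sub>R v k) = (\<Sum>k\<in>I. b k *\<^sub>R v k)" and k: "k \<in> I"
  shows "a k = b k"
proof -
  define c where "c w = a (the_inv_into I v w) - b (the_inv_into I v w)" for w
  have "(\<Sum>w\<in>v ` I. c w *\<^sub>R w) = (\<Sum>k\<in>I. (a k - b k) *\<^sub>R v k)"
    by (simp add: sum.reindex[OF inj] c_def the_inv_into_f_f[OF inj])
  also have "\<dots> = 0" using eq by (simp add: scaleR_diff_left sum_subtractf)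
  finally have "c (v k) = 0" using ind k unfolding independent_explicit by blast
  then show ?thesis by (simp add: c_def the_inv_into_f_f[OF inj k])
qed

lemma rel_interior_convex_cone_hull_coeff_pos:
  fixes v :: "'i \<Rightarrow> 'a::euclidean_space"
  assumes ind: "independent (v ` I)" and inj: "inj_on v I"
    and u: "u \<in> rel_interior (convex_cone hull (v ` I))"
    and ua: "u = (\<Sum>j\<in>I. a j *\<^sub>R v j)" and k: "k \<in> I"
  shows "a k > 0"
proof -
  have fin: "finite I" using finiteI_independent[OF ind] finite_image_iff[OF inj] by blast
  obtain e where e: "e > 1" "(1 - e) *\<^sub>R v k + e *\<^sub>R u \<in> convex_cone hull (v ` I)"
    using u k hull_inc[of "v k" "v ` I" convex_cone]
    unfolding convex_rel_interior_iff[OF convex_convex_cone_hull convex_cone_hull_nonempty] by blast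
  then obtain b where b: "\<forall>j\<in>I. 0 \<le> b j" "(1 - e) *\<^sub>R v k + e *\<^sub>R u = (\<Sum>j\<in>I. b j *\<^sub>R v j)"
    unfolding convex_cone_hull_image_finite[OF fin] by blast
  have "(\<Sum>j\<in>I. (e * a j + (if j = k then 1 - e else 0)) *\<^sub>R v j) = (1 - e) *\<^sub>R v k + e *\<^sub>R u"
    using fin k by (simp add: ua scaleR_add_left sum.distrib scaleR_sum_right
        if_distrib[of "\<lambda>c. c *\<^sub>R _"] cong: if_cong)
  then have "e * a k + (if k = k then 1 - e else 0) = b k"
    using b(2) by (intro independent_image_coeffs_eq[OF ind inj _ k]) simp
  then have "0 < e * a k" using b(1) k e(1) by fastforce
  then show ?thesis using e(1) by (simp add: zero_less_mult_iff)
qed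

lemma convex_cone_hull_singleton: "convex_cone hull {x} = {\<mu> *\<^sub>R x | \<mu>. \<mu> \<ge> 0}"
proof -
  have "convex_cone hull {x} = {a x *\<^sub>R x | a. 0 \<le> a x}"
    using convex_cone_hull_image_finite[of "{x}" "\<lambda>t. t"] by simp
  also have "\<dots> = {\<mu> *\<^sub>R x | \<mu>. \<mu> \<ge> 0}"
    by (blast intro: exI[of _ "\<lambda>_. _"])
  finally show ?thesis .
qed

lemma convex_cone_hull_scaleR_singleton:
  assumes "c > 0"
  shows "convex_cone hull {c *\<^sub>R x} = convex_cone hull {x}"
proof (intro equalityI hull_minimal)
  show "{c *\<^sub>R x} \<subseteq> convex_cone hull {x}"
    using assms by (simp add: convex_cone_hull_mul hull_inc)
  have "(1 / c) *\<^sub>R (c *\<^sub>R x) \<in> convex_cone hull {c *\<^sub>R x}"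
    using assms by (intro convex_cone_hull_mul hull_inc) simp_all
  then show "{x} \<subseteq> convex_cone hull {c *\<^sub>R x}" using assms by simp
qed (simp_all add: convex_cone_convex_cone_hull)

lemma aff_dim_convex_cone_hull_singleton:
  fixes x :: "'a::euclidean_space"
  assumes "x \<noteq> 0"
  shows "aff_dim (convex_cone hull {x}) = 1"
proof -
  have "convex_cone hull {x} \<subseteq> span {x}"
    by (simp add: hull_minimal convex_cone_span span_base)
  moreover have "x \<in> span (convex_cone hull {x})" by (simp add: hull_inc span_base)
  ultimately have "span (convex_cone hull {x}) = span {x}" unfolding span_eq by blast
  then have "dim (convex_cone hull {x}) = 1"
    using assms dim_span dim_singleton by metis
  moreover have "aff_dim (convex_cone hull {x}) = int (dim (convex_cone hull {x}))"
    by (rule aff_dim_zero) (simp add: hull_inc convex_cone_hull_contains_0)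
  ultimately show ?thesis by simp
qed

lemma face_of_convex_cone_add:
  assumes R: "R face_of C" and C: "convex_cone C" and y: "y \<in> C" and z: "z \<in> C"
    and yz: "y + z \<in> R"
  shows "y \<in> R"
proof -
  have conic: "conic R" using face_of_conic C R unfolding convex_cone_def by blast
  have "2 *\<^sub>R y \<in> R"
  proof (cases "y = z")
    case True
    then show ?thesis using yz by (simp add: scaleR_2)
  next
    case False
    have "2 *\<^sub>R y \<in> C" "2 *\<^sub>R z \<in> C" using C y z by (simp_all add: convex_cone_iff)
    moreover have "y + z \<in> open_segment (2 *\<^sub>R y) (2 *\<^sub>R z)"
      using midpoint_in_open_segment[of "2 *\<^sub>R y" "2 *\<^sub>R z"] False
      by (simp add: midpoint_def scaleR_add_right[symmetric])
    ultimately show ?thesis using face_ofD[OF R] yz by blast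
  qed
  from conic_mul[OF conic this, of "1/2"] show ?thesis by simp
qed

lemma face_of_convex_cone_hull_generator:
  assumes fin: "finite S" and R: "R face_of convex_cone hull S"
    and a: "\<forall>s\<in>S. 0 \<le> a s" "(\<Sum>s\<in>S. a s *\<^sub>R s) \<in> R" and t: "t \<in> S" "a t > 0"
  shows "t \<in> R"
proof -
  have "a t *\<^sub>R t \<in> convex_cone hull S" using t by (simp add: convex_cone_hull_mul hull_inc)
  moreover have "(\<Sum>s\<in>S. a s *\<^sub>R s) - a t *\<^sub>R t \<in> convex_cone hull S"
  proof -
    have "(\<Sum>s\<in>S. a s *\<^sub>R s) - a t *\<^sub>R t = (\<Sum>s\<in>S. (a s - (if s = t then a t else 0)) *\<^sub>R s)"
      using fin t(1) by (simp add: scaleR_diff_left sum_subtractf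
          if_distrib[of "\<lambda>c. c *\<^sub>R _"] cong: if_cong)
    then show ?thesis
      unfolding convex_cone_hull_image_finite[OF fin, of "\<lambda>s. s", simplified] using a(1) by auto
  qed
  moreover have "a t *\<^sub>R t + ((\<Sum>s\<in>S. a s *\<^sub>R s) - a t *\<^sub>R t) \<in> R" using a(2) by simp
  ultimately have "a t *\<^sub>R t \<in> R" by (rule face_of_convex_cone_add[OF R convex_cone_convex_cone_hull])
  from conic_mul[OF face_of_conic[OF conic_convex_cone_hull R] this, of "1 / a t"]
  show ?thesis using t(2) by simp
qed

lemma face_of_convex_cone_hull_subset:
  fixes S :: "'a::euclidean_space set"
  assumes ind: "independent S" and TS: "T \<subseteq> S"
  shows "convex_cone hull T face_of convex_cone hull S"
proof -
  have fin: "finite S" using ind by (rule finiteI_independent)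
  have cone_S: "convex_cone hull S = {\<Sum>t\<in>S. a t *\<^sub>R t | a. \<forall>t\<in>S. 0 \<le> a t}"
    using convex_cone_hull_image_finite[OF fin, of "\<lambda>t. t"] by simp
  have in_T: "(\<Sum>t\<in>S. a t *\<^sub>R t) \<in> convex_cone hull T"
    if "\<forall>t\<in>S. 0 \<le> a t" "\<forall>t\<in>S - T. a t = 0" for a
  proof -
    have "(\<Sum>t\<in>S. a t *\<^sub>R t) = (\<Sum>t\<in>T. a t *\<^sub>R t)"
      using that fin TS by (intro sum.mono_neutral_right) auto
    moreover have "(\<Sum>t\<in>T. a t *\<^sub>R t) \<in> convex_cone hull T"
      using that TS
      by (intro convex_cone_sum[OF convex_cone_convex_cone_hull] convex_cone_hull_mul hull_inc) auto
    ultimately show ?thesis by simp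
  qed
  show ?thesis unfolding face_of_def
  proof (intro conjI ballI impI)
    fix a b x assume "a \<in> convex_cone hull S" "b \<in> convex_cone hull S"
      and x: "x \<in> convex_cone hull T" "x \<in> open_segment a b"
    then obtain \<alpha> \<beta> where \<alpha>: "\<forall>t\<in>S. 0 \<le> \<alpha> t" "a = (\<Sum>t\<in>S. \<alpha> t *\<^sub>R t)"
      and \<beta>: "\<forall>t\<in>S. 0 \<le> \<beta> t" "b = (\<Sum>t\<in>S. \<beta> t *\<^sub>R t)"
      unfolding cone_S by blast
    obtain \<gamma> where \<gamma>: "x = (\<Sum>t\<in>T. \<gamma> t *\<^sub>R t)"
      using x(1) convex_cone_hull_image_finite[OF finite_subset[OF TS fin], of "\<lambda>t. t"] by auto
    obtain u where u: "0 < u" "u < 1" "x = (1 - u) *\<^sub>R a + u *\<^sub>R b"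
      using x(2) by (auto simp: in_segment)
    have sums: "(\<Sum>t\<in>S. ((1 - u) * \<alpha> t + u * \<beta> t) *\<^sub>R t)
        = (\<Sum>t\<in>S. (if t \<in> T then \<gamma> t else 0) *\<^sub>R t)"
    proof -
      have "(\<Sum>t\<in>S. ((1 - u) * \<alpha> t + u * \<beta> t) *\<^sub>R t) = x"
        by (simp add: u(3) \<alpha>(2) \<beta>(2) scaleR_add_left sum.distrib scaleR_sum_right)
      also have "\<dots> = (\<Sum>t\<in>S. (if t \<in> T then \<gamma> t else 0) *\<^sub>R t)"
        unfolding \<gamma> using fin TS by (intro sum.mono_neutral_cong_left) auto
      finally show ?thesis .
    qed
    have "(1 - u) * \<alpha> t + u * \<beta> t = 0" if "t \<in> S - T" for t
      using independent_image_coeffs_eq[of "\<lambda>t. t" S "\<lambda>t. (1 - u) * \<alpha> t + u * \<beta> t"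
          "\<lambda>t. if t \<in> T then \<gamma> t else 0" t] ind sums that
      by simp
    moreover have "0 \<le> (1 - u) * \<alpha> t" "0 \<le> u * \<beta> t" if "t \<in> S" for t
      using that \<alpha>(1) \<beta>(1) u(1,2) by simp_all
    ultimately have "\<alpha> t = 0 \<and> \<beta> t = 0" if "t \<in> S - T" for t
      using that u(1,2) by (simp add: add_nonneg_eq_0_iff)
    then show "a \<in> convex_cone hull T" "b \<in> convex_cone hull T"
      using in_T \<alpha> \<beta> by blast+
  qed (simp_all add: TS hull_mono convex_convex_cone_hull)
qed

section \<open>Products of convex sets\<close>

lemma closure_vector_box:
  fixes S :: "'n::finite \<Rightarrow> 'a::metric_space set"
  shows "closure {x. \<forall>i. x $ i \<in> S i} = {x. \<forall>i. x $ i \<in> closure (S i)}"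
proof
  show "closure {x. \<forall>i. x $ i \<in> S i} \<subseteq> {x. \<forall>i. x $ i \<in> closure (S i)}"
    by (intro closure_minimal closed_vector_box) (auto intro: closure_subset[THEN subsetD])
  show "{x. \<forall>i. x $ i \<in> closure (S i)} \<subseteq> closure {x. \<forall>i. x $ i \<in> S i}"
  proof
    fix x assume "x \<in> {x. \<forall>i. x $ i \<in> closure (S i)}"
    then have "\<forall>i. \<exists>f. (\<forall>n. f n \<in> S i) \<and> f \<longlonglongrightarrow> x $ i"
      using closure_sequential by blast
    then obtain f where f: "\<And>i n. f i n \<in> S i" "\<And>i. f i \<longlonglongrightarrow> x $ i"
      by metis
    have "(\<lambda>n. \<chi> i. f i n) \<longlonglongrightarrow> (\<chi> i. x $ i)"
      using f(2) by (intro tendsto_vec_lambda)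
    then show "x \<in> closure {x. \<forall>i. x $ i \<in> S i}"
      unfolding closure_sequential using f(1) by (intro exI[of _ "\<lambda>n. \<chi> i. f i n"]) simp
  qed
qed

lemma face_of_vector_box_update:
  assumes F: "F face_of {x. \<forall>i. x $ i \<in> S i}" and x: "x \<in> F" and y: "y \<in> F"
  shows "(\<chi> i. if i = j then y $ j else x $ i) \<in> F"
proof -
  define x' where "x' = (\<chi> i. if i = j then y $ j else x $ i)"
  define y' where "y' = (\<chi> i. if i = j then x $ j else y $ i)"
  have FS: "F \<subseteq> {x. \<forall>i. x $ i \<in> S i}" using F face_of_imp_subset by blast
  have box: "x' \<in> {x. \<forall>i. x $ i \<in> S i}" "y' \<in> {x. \<forall>i. x $ i \<in> S i}"
    using FS x y by (auto simp: x'_def y'_def)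
  have mid: "midpoint x' y' = midpoint x y"
    by (simp add: vec_eq_iff x'_def y'_def midpoint_def algebra_simps)
  have "convex F" using F by (rule face_of_imp_convex)
  then have "midpoint x y \<in> F"
    using x y convexD[of F x y "1/2" "1/2"] by (simp add: midpoint_def scaleR_add_right)
  then have "x' \<in> F"
    using face_ofD[OF F _ box] mid midpoint_in_open_segment[of x' y'] by (cases "x' = y'") auto
  then show ?thesis by (simp add: x'_def)
qed

lemma face_of_vector_box_component:
  fixes S :: "'n::finite \<Rightarrow> 'a::real_normed_vector set"
  assumes F: "F face_of {x. \<forall>i. x $ i \<in> S i}"
  shows "(\<lambda>x. x $ j) ` F face_of S j"
  unfolding face_of_def
proof (intro conjI ballI impI)
  have FS: "F \<subseteq> {x. \<forall>i. x $ i \<in> S i}" using F face_of_imp_subset by blast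
  then show "(\<lambda>x. x $ j) ` F \<subseteq> S j" by auto
  have "convex F" using F by (rule face_of_imp_convex)
  then show "convex ((\<lambda>x. x $ j) ` F)"
    by (intro convex_linear_image bounded_linear.linear[OF bounded_linear_vec_nth])
  fix a b z assume a: "a \<in> S j" and b: "b \<in> S j" and "z \<in> (\<lambda>x. x $ j) ` F"
    and z: "z \<in> open_segment a b"
  then obtain x where x: "x \<in> F" "z = x $ j" by blast
  define a' where "a' = (\<chi> i. if i = j then a else x $ i)"
  define b' where "b' = (\<chi> i. if i = j then b else x $ i)"
  have box: "a' \<in> {x. \<forall>i. x $ i \<in> S i}" "b' \<in> {x. \<forall>i. x $ i \<in> S i}"
    using FS x a b by (auto simp: a'_def b'_def)
  obtain u where u: "a \<noteq> b" "0 < u" "u < 1" "z = (1 - u) *\<^sub>R a + u *\<^sub>R b"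
    using z by (auto simp: in_segment)
  have "a' \<noteq> b'" using u(1) by (auto simp: a'_def b'_def vec_eq_iff)
  moreover have "x = (1 - u) *\<^sub>R a' + u *\<^sub>R b'"
    using u(4) x(2) by (simp add: a'_def b'_def vec_eq_iff algebra_simps)
  ultimately have "x \<in> open_segment a' b'" using u(2,3) by (auto simp: in_segment)
  then have "a' \<in> F" "b' \<in> F" using face_ofD[OF F _ box] x(1) by blast+
  moreover have "a = a' $ j" "b = b' $ j" by (simp_all add: a'_def b'_def)
  ultimately show "a \<in> (\<lambda>x. x $ j) ` F" "b \<in> (\<lambda>x. x $ j) ` F" by blast+
qed

lemma face_of_vector_box:
  assumes F: "F face_of {x. \<forall>i. x $ i \<in> S i}" and "F \<noteq> {}"
  shows "F = {x. \<forall>i. x $ i \<in> (\<lambda>x. x $ i) ` F}"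
proof
  show "F \<subseteq> {x. \<forall>i. x $ i \<in> (\<lambda>x. x $ i) ` F}" by blast
  show "{x. \<forall>i. x $ i \<in> (\<lambda>x. x $ i) ` F} \<subseteq> F"
  proof
    fix x assume "x \<in> {x. \<forall>i. x $ i \<in> (\<lambda>x. x $ i) ` F}"
    then have "\<forall>i. \<exists>z. z \<in> F \<and> x $ i = z $ i" by blast
    then have "\<exists>y. \<forall>i. y i \<in> F \<and> x $ i = y i $ i" by (rule choice)
    then obtain y where y: "\<And>i. y i \<in> F" "\<And>i. x $ i = y i $ i" by blast
    obtain x0 where x0: "x0 \<in> F" using \<open>F \<noteq> {}\<close> by blast
    have "(\<chi> i. if i \<in> J then x $ i else x0 $ i) \<in> F" if "finite J" for J
      using that
    proof (induction J rule: finite_induct)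
      case empty
      then show ?case using x0 by simp
    next
      case (insert j J)
      have "(\<chi> i. if i = j then y j $ j else (\<chi> i. if i \<in> J then x $ i else x0 $ i) $ i) \<in> F"
        by (rule face_of_vector_box_update[OF F insert.IH y(1)])
      moreover have "(\<chi> i. if i = j then y j $ j else (\<chi> i. if i \<in> J then x $ i else x0 $ i) $ i)
          = (\<chi> i. if i \<in> insert j J then x $ i else x0 $ i)"
        using y(2) by (simp add: vec_eq_iff)
      ultimately show ?case by simp
    qed
    from this[of UNIV] show "x \<in> F" by simp
  qed
qed

section \<open>Simplicial normal fans with ray generators\<close>

locale simplicial_normal_fan =
  fixes P :: "'a::euclidean_space set" and v :: "'n::finite \<Rightarrow> 'a"
  assumes polytope: "polytope P"
    and simplicial: "simplicial_fan (normal_fan P)"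
    and rays: "ray_generators (normal_fan P) v"
begin

abbreviation \<Delta> :: "'a set set" where "\<Delta> \<equiv> normal_fan P"

lemma ray_in_fan: "convex_cone hull {v k} \<in> \<Delta>"
  using rays unfolding ray_generators_def by blast

lemma fan_ray_cases:
  assumes "\<sigma> \<in> \<Delta>" "aff_dim \<sigma> = 1"
  obtains k where "\<sigma> = convex_cone hull {v k}"
  using assms rays unfolding ray_generators_def by blast

lemma v_nonzero: "v k \<noteq> 0"
  using rays unfolding ray_generators_def by blast

lemma polytope_nonempty: "P \<noteq> {}"
  using ray_in_fan normal_fan_nonempty_polytope by blast

lemma eq_if_scaleR_v_eq:
  assumes "\<alpha> > 0" "\<beta> > 0" "\<alpha> *\<^sub>R v i = \<beta> *\<^sub>R v j"
  shows "i = j"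
proof -
  have "v i = (1 / \<alpha>) *\<^sub>R (\<alpha> *\<^sub>R v i)" using assms(1) by simp
  also have "\<dots> = (\<beta> / \<alpha>) *\<^sub>R v j" using assms(3) by simp
  finally have "v i = (\<beta> / \<alpha>) *\<^sub>R v j" .
  then have "convex_cone hull {v i} = convex_cone hull {v j}"
    using assms by (simp add: convex_cone_hull_scaleR_singleton)
  then show ?thesis using rays unfolding ray_generators_def by (auto dest: injD)
qed

lemma inj_v: "inj v"
  by (rule injI) (rule eq_if_scaleR_v_eq[of 1 1]; simp)

lemma cone_of_eq_normal_cone_maximizers: "cone_of \<Delta> u = normal_cone P (maximizers P u)"
  using cone_of_normal_fan[OF polytope polytope_nonempty] .

lemma cone_of_in_fan: "cone_of \<Delta> u \<in> \<Delta>"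
  unfolding cone_of_eq_normal_cone_maximizers using normal_cone_maximizers_in_normal_fan[OF polytope polytope_nonempty] .

lemma in_rel_interior_cone_of: "u \<in> rel_interior (cone_of \<Delta> u)"
  unfolding cone_of_eq_normal_cone_maximizers using rel_interior_normal_cone_maximizers[OF polytope polytope_nonempty] .

lemma cone_of_unique: "\<sigma> \<in> \<Delta> \<Longrightarrow> u \<in> rel_interior \<sigma> \<Longrightarrow> cone_of \<Delta> u = \<sigma>"
  unfolding cone_of_eq_normal_cone_maximizers using normal_fan_eq_normal_cone_maximizers[OF polytope] by simp

lemma generator_eq_scaleR_ray:
  assumes \<sigma>: "\<sigma> \<in> \<Delta>" "\<sigma> = convex_cone hull S" and S: "independent S" "s \<in> S"
  obtains k \<mu> where "v k \<in> \<sigma>" "\<mu> > 0" "s = \<mu> *\<^sub>R v k"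
proof -
  have face: "convex_cone hull {s} face_of \<sigma>"
    unfolding \<sigma>(2) using S by (simp add: face_of_convex_cone_hull_subset)
  then have "convex_cone hull {s} \<in> \<Delta>"
    using face_of_normal_fan_in_normal_fan[OF polytope \<sigma>(1)] convex_cone_hull_nonempty by blast
  moreover have "s \<noteq> 0" using S dependent_zero by blast
  ultimately obtain k where k: "convex_cone hull {s} = convex_cone hull {v k}"
    using fan_ray_cases aff_dim_convex_cone_hull_singleton by metis
  then obtain \<mu> where "\<mu> \<ge> 0" "s = \<mu> *\<^sub>R v k"
    using hull_inc[of s "{s}" convex_cone] unfolding convex_cone_hull_singleton by auto
  moreover have "v k \<in> \<sigma>"
    using k face face_of_imp_subset hull_inc[of "v k" "{v k}" convex_cone] by blast
  ultimately show ?thesis using that \<open>s \<noteq> 0\<close> by fastforce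
qed

lemma ray_eq_scaleR_generator:
  assumes \<sigma>: "\<sigma> \<in> \<Delta>" "\<sigma> = convex_cone hull S" and S: "independent S" and k: "v k \<in> \<sigma>"
  obtains t \<mu> where "t \<in> S" "\<mu> > 0" "t = \<mu> *\<^sub>R v k"
proof -
  have fin: "finite S" using S by (rule finiteI_independent)
  have "convex_cone hull {v k} \<subseteq> \<sigma>"
    using k convex_cone_normal_fan[OF \<sigma>(1)] by (simp add: hull_minimal)
  then have R: "convex_cone hull {v k} face_of convex_cone hull S"
    using normal_fan_subset_imp_face_of[OF polytope ray_in_fan \<sigma>(1)] \<sigma>(2) by simp
  obtain a where a: "\<forall>t\<in>S. 0 \<le> a t" "v k = (\<Sum>t\<in>S. a t *\<^sub>R t)"
    using k convex_cone_hull_image_finite[OF fin, of "\<lambda>t. t"] unfolding \<sigma>(2) by auto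
  have "\<exists>t\<in>S. a t \<noteq> 0"
  proof (rule ccontr)
    assume "\<not> (\<exists>t\<in>S. a t \<noteq> 0)"
    then have "v k = 0" using a(2) by simp
    then show False using v_nonzero by blast
  qed
  then obtain t where t: "t \<in> S" "a t > 0" using a(1) by (auto simp: order_less_le)
  have "t \<in> convex_cone hull {v k}"
    using face_of_convex_cone_hull_generator[OF fin R a(1) _ t] a(2) hull_inc[of "v k"] by simp
  then obtain \<mu> where "\<mu> \<ge> 0" "t = \<mu> *\<^sub>R v k" unfolding convex_cone_hull_singleton by blast
  moreover have "t \<noteq> 0" using S t(1) dependent_zero by blast
  ultimately show ?thesis using that t(1) by fastforce
qed

lemma cell_eq_convex_cone_hull_rays:
  assumes \<sigma>: "\<sigma> \<in> \<Delta>"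
  shows "\<sigma> = convex_cone hull (v ` gen_idx v \<sigma>)"
proof
  obtain S where S: "independent S" "\<sigma> = convex_cone hull S"
    using simplicial \<sigma> unfolding simplicial_fan_def by blast
  have "s \<in> convex_cone hull (v ` gen_idx v \<sigma>)" if s: "s \<in> S" for s
  proof -
    obtain k \<mu> where "v k \<in> \<sigma>" "\<mu> > 0" "s = \<mu> *\<^sub>R v k"
      using generator_eq_scaleR_ray[OF \<sigma> S(2,1) s] .
    then show ?thesis by (simp add: gen_idx_def convex_cone_hull_mul hull_inc)
  qed
  then show "\<sigma> \<subseteq> convex_cone hull (v ` gen_idx v \<sigma>)"
    unfolding S(2) by (simp add: hull_minimal subsetI convex_cone_convex_cone_hull)
  show "convex_cone hull (v ` gen_idx v \<sigma>) \<subseteq> \<sigma>"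
    by (rule hull_minimal) (auto simp: gen_idx_def convex_cone_normal_fan[OF \<sigma>])
qed

lemma independent_rays_of_cell:
  assumes \<sigma>: "\<sigma> \<in> \<Delta>"
  shows "independent (v ` gen_idx v \<sigma>)"
proof -
  obtain S where S: "independent S" "\<sigma> = convex_cone hull S"
    using simplicial \<sigma> unfolding simplicial_fan_def by blast
  define I where "I = gen_idx v \<sigma>"
  have "\<sigma> \<subseteq> span S" unfolding S(2) by (simp add: hull_minimal convex_cone_span span_superset)
  then have "v ` I \<subseteq> span S" by (auto simp: I_def gen_idx_def)
  moreover have "S \<subseteq> span (v ` I)"
  proof
    fix s assume "s \<in> S"
    then obtain k \<mu> where "v k \<in> \<sigma>" "s = \<mu> *\<^sub>R v k"
      using generator_eq_scaleR_ray[OF \<sigma> S(2,1)] by metis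
    then show "s \<in> span (v ` I)" by (simp add: I_def gen_idx_def span_base span_scale)
  qed
  then have "span S \<subseteq> span (v ` I)" by (simp add: span_minimal)
  moreover have "card (v ` I) \<le> dim (span S)"
  proof -
    have "\<forall>k\<in>I. \<exists>t. t \<in> S \<and> (\<exists>\<mu>>0. t = \<mu> *\<^sub>R v k)"
      using ray_eq_scaleR_generator[OF \<sigma> S(2,1)] unfolding I_def gen_idx_def by blast
    then obtain g where g: "\<And>k. k \<in> I \<Longrightarrow> g k \<in> S \<and> (\<exists>\<mu>>0. g k = \<mu> *\<^sub>R v k)"
      by metis
    have "inj_on g I"
      by (rule inj_onI) (metis g eq_if_scaleR_v_eq)
    then have "card I \<le> card S"
      using g finiteI_independent[OF S(1)] by (intro card_inj_on_le) auto
    then show ?thesis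
      using card_image_le[of I v] dim_span_eq_card_independent[OF S(1)] by simp
  qed
  ultimately show ?thesis unfolding I_def by (intro card_le_dim_spanning[where V = "span S"]) auto
qed

lemma coord_pos_iff: "coord \<Delta> v u i > 0 \<longleftrightarrow> v i \<in> cone_of \<Delta> u"
proof -
  define \<sigma> where "\<sigma> = cone_of \<Delta> u"
  define I where "I = gen_idx v \<sigma>"
  have \<sigma>: "\<sigma> \<in> \<Delta>" and u: "u \<in> rel_interior \<sigma>"
    unfolding \<sigma>_def by (simp_all add: cone_of_in_fan in_rel_interior_cone_of)
  have ind: "independent (v ` I)"
    unfolding I_def by (rule independent_rays_of_cell[OF \<sigma>])
  have inj: "inj_on v I" using inj_on_subset[OF inj_v subset_UNIV] .
  have cone: "\<sigma> = convex_cone hull (v ` I)"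
    unfolding I_def by (rule cell_eq_convex_cone_hull_rays[OF \<sigma>])
  then obtain a where a: "\<forall>k\<in>I. 0 \<le> a k" "u = (\<Sum>k\<in>I. a k *\<^sub>R v k)"
    using u rel_interior_subset convex_cone_hull_image_finite[of I v] by auto
  define c where "c k = (if k \<in> I then a k else 0)" for k
  have sum_c: "(\<Sum>k\<in>I. c k *\<^sub>R v k) = u" unfolding a(2) c_def by (rule sum.cong) simp_all
  have "coord \<Delta> v u = c"
    unfolding coord_def \<sigma>_def[symmetric] I_def[symmetric]
  proof (rule the_equality)
    show "(\<forall>k. k \<notin> I \<longrightarrow> c k = 0) \<and> u = (\<Sum>k\<in>I. c k *\<^sub>R v k)"
      using sum_c by (simp add: c_def)
    fix c' assume c': "(\<forall>k. k \<notin> I \<longrightarrow> c' k = 0) \<and> u = (\<Sum>k\<in>I. c' k *\<^sub>R v k)"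
    show "c' = c"
    proof
      fix k show "c' k = c k"
        using c' sum_c independent_image_coeffs_eq[OF ind inj, of c' c k] by (cases "k \<in> I") (simp_all add: c_def)
    qed
  qed
  moreover have "a k > 0" if "k \<in> I" for k
    using rel_interior_convex_cone_hull_coeff_pos[OF ind inj _ a(2) that] u cone by simp
  ultimately show ?thesis by (auto simp: c_def I_def gen_idx_def \<sigma>_def)
qed

lemma graph_of_eq: "graph_of \<Delta> v U = {(i, j). v i \<in> cone_of \<Delta> (U $ j)}"
  unfolding graph_of_def coord_pos_iff ..

lemma graph_of_eq_iff:
  "graph_of \<Delta> v U' = graph_of \<Delta> v U \<longleftrightarrow> (\<forall>j. cone_of \<Delta> (U' $ j) = cone_of \<Delta> (U $ j))"
proof
  assume "graph_of \<Delta> v U' = graph_of \<Delta> v U"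
  then have "gen_idx v (cone_of \<Delta> (U' $ j)) = gen_idx v (cone_of \<Delta> (U $ j))" for j
    unfolding graph_of_eq gen_idx_def by (auto simp: set_eq_iff)
  then show "\<forall>j. cone_of \<Delta> (U' $ j) = cone_of \<Delta> (U $ j)"
    by (metis cell_eq_convex_cone_hull_rays cone_of_in_fan)
qed (simp add: graph_of_eq)

lemma U_of_graph_of:
  "U_of \<Delta> v (graph_of \<Delta> v U) = {U'. \<forall>j. U' $ j \<in> rel_interior (cone_of \<Delta> (U $ j))}"
  unfolding U_of_def graph_of_eq_iff
  using cone_of_unique[OF cone_of_in_fan] in_rel_interior_cone_of by metis

lemma closure_U_of_graph_of:
  "closure (U_of \<Delta> v (graph_of \<Delta> v U)) = {U'. \<forall>j. U' $ j \<in> cone_of \<Delta> (U $ j)}"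
proof -
  have "closure (rel_interior (cone_of \<Delta> u)) = cone_of \<Delta> u" for u
    using cone_of_in_fan convex_normal_fan closed_normal_fan
    by (metis convex_closure_rel_interior closure_closed)
  then show ?thesis unfolding U_of_graph_of closure_vector_box by simp
qed

lemma closure_U_of_in_product_fan: "closure (U_of \<Delta> v (graph_of \<Delta> v U)) \<in> product_fan \<Delta>"
  unfolding closure_U_of_graph_of product_fan_def
  by (intro CollectI exI[of _ "\<lambda>j. cone_of \<Delta> (U $ j)"]) (simp add: cone_of_in_fan)

lemma face_of_closure_U_of:
  fixes U :: "'a ^ 'm::finite"
  assumes F: "F face_of closure (U_of \<Delta> v (graph_of \<Delta> v U))" "F \<noteq> {}"
  obtains U' where "F = closure (U_of \<Delta> v (graph_of \<Delta> v U'))"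
    and "graph_of \<Delta> v U' \<subseteq> graph_of \<Delta> v U"
proof -
  have box: "F face_of {U'. \<forall>j. U' $ j \<in> cone_of \<Delta> (U $ j)}"
    using F(1) unfolding closure_U_of_graph_of .
  define \<tau> where "\<tau> j = (\<lambda>x. x $ j) ` F" for j
  have \<tau>: "\<tau> j face_of cone_of \<Delta> (U $ j)" "\<tau> j \<noteq> {}" for j
    unfolding \<tau>_def using face_of_vector_box_component[OF box] F(2) by blast+
  then have \<tau>_in_fan: "\<tau> j \<in> \<Delta>" for j
    using face_of_normal_fan_in_normal_fan[OF polytope cone_of_in_fan] by blast
  then have "\<forall>j. \<exists>u. u \<in> rel_interior (\<tau> j)"
    using convex_normal_fan normal_fan_cell_nonempty rel_interior_eq_empty by blast
  then obtain u where u: "\<And>j. u j \<in> rel_interior (\<tau> j)" by metis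
  define U' :: "'a ^ 'm" where "U' = (\<chi> j. u j)"
  have U': "cone_of \<Delta> (U' $ j) = \<tau> j" for j
    unfolding U'_def using cone_of_unique[OF \<tau>_in_fan u] by simp
  show ?thesis
  proof (rule that)
    show "F = closure (U_of \<Delta> v (graph_of \<Delta> v U'))"
      unfolding closure_U_of_graph_of U' \<tau>_def using face_of_vector_box[OF box F(2)] .
    show "graph_of \<Delta> v U' \<subseteq> graph_of \<Delta> v U"
      unfolding graph_of_eq U' using \<tau>(1) face_of_imp_subset by blast
  qed
qed

end

lemma has_matching_of_size_mono:
  assumes "has_matching_of_size G' k" "G' \<subseteq> G"
  shows "has_matching_of_size G k"
proof -
  obtain M where M: "is_matching G' M" "finite M" "card M = k"
    using assms(1) unfolding has_matching_of_size_def by blast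
  have "is_matching G M"
    using M(1) assms(2) unfolding is_matching_def by (simp add: subset_trans[of M G' G])
  then show ?thesis using M(2,3) unfolding has_matching_of_size_def by blast
qed

theorem lemma3p9:
  fixes \<Delta> :: "(real ^ 'd) set set"
    and v :: "'n::finite \<Rightarrow> real ^ 'd"
  assumes "simplicial_fan \<Delta>"
    and "polytopal_fan \<Delta>"
    and "ray_generators \<Delta> v"
  shows "subcomplex
           {closure (U_of \<Delta> v G) | G :: ('n \<times> 'm::finite) set.
              G \<in> graphs \<Delta> v \<and> \<not> has_matching_of_size G CARD('n)}
           (product_fan \<Delta> :: (real ^ 'd ^ 'm) set set)"
proof -
  obtain P where P: "polytope P" and \<Delta>: "\<Delta> = normal_fan P"
    using assms(2) unfolding polytopal_fan_def by blast
  interpret simplicial_normal_fan P v using P assms(1,3) unfolding \<Delta> by unfold_locales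
  \<comment> \<open>The fixed \<open>\<Delta>\<close> shadows the locale abbreviation; \<open>folded \<Delta>\<close> turns the
    locale's \<open>normal_fan P\<close> back into it.\<close>
  show ?thesis unfolding subcomplex_def graphs_def
  proof (intro conjI subsetI allI impI ballI, goal_cases)
    case (1 C)
    then show ?case using closure_U_of_in_product_fan[folded \<Delta>] by blast
  next
    case (2 C F)
    then obtain U :: "real ^ 'd ^ 'm" where C: "C = closure (U_of \<Delta> v (graph_of \<Delta> v U))"
      and no_matching: "\<not> has_matching_of_size (graph_of \<Delta> v U) CARD('n)"
      by blast
    obtain U' where "F = closure (U_of \<Delta> v (graph_of \<Delta> v U'))"
      and "graph_of \<Delta> v U' \<subseteq> graph_of \<Delta> v U"
      using face_of_closure_U_of[folded \<Delta>] 2 unfolding C by blast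
    then show ?case using no_matching has_matching_of_size_mono by blast
  qed
qed

end
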